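(* For the Lr $(\mathbf a,\tau)$ interval exchange transformation $T$ and its dual $\tilde T$ (with no further hypotheses), the associated subshift satisfies $X=\mathcal I([0,1))\cup\tilde{\mathcal I}((0,1])$.
   Context: Fix $n\ge 2$, $[n]=\{1,\dots,n\}$, a vector $\mathbf a=(a_1,\dots,a_n)$ with all $a_i>0$ and $\sum_i a_i=1$, and a permutation $\tau$ of $[n]$. Put $b_0=0$, $b_i=\sum_{j=1}^i a_j$, $J_i=[b_{i-1},b_i)$, $\tilde J_i=(b_{i-1},b_i]$, $D=\{b_1,\dots,b_{n-1}\}$, $b^\tau_0=0$, $b^\tau_i=\sum_{j=1}^i a_{\tau^{-1}(j)}$. $T:[0,1)\to[0,1)$ and $\tilde T:(0,1]\to(0,1]$ are defined by $x\mapsto x-b_{i-1}+b^\tau_{\tau(i)-1}$ for $x\in J_i$ (resp. $x\in\tilde J_i$); both are bijections. $\Omega=[n]^{\mathbb Z}$ with the product topology. The itinerary maps are $\mathcal I(x)_k=i\iff T^kx\in J_i$ and $\tilde{\mathcal I}(x)_k=i\iff\tilde T^kx\in\tilde J_i$ ($k\in\mathbb Z$). $D_\infty=\{0,1\}\cup\bigcup_{k\in\mathbb Z}T^k(D)$, $R=[0,1]\setminus D_\infty$, $X_0=\mathcal I(R)$, $X=\overline{X_0}$ (closure in $\Omega$). *)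

theory Defs
  imports "HOL-Analysis.Analysis" "HOL-Combinatorics.Permutations"
begin

text \<open>Omega = [n]^Z is rendered as the subspace of int => nat (product topology, nat discrete);
  [n]^Z is closed in nat^Z, so closures agree.\<close>

definition iet_b :: "(nat \<Rightarrow> real) \<Rightarrow> nat \<Rightarrow> real" where
  "iet_b a i = (\<Sum>j\<in>{1..i}. a j)"

definition iet_btau :: "nat \<Rightarrow> (nat \<Rightarrow> real) \<Rightarrow> (nat \<Rightarrow> nat) \<Rightarrow> nat \<Rightarrow> real" where
  "iet_btau n a \<tau> i = (\<Sum>j\<in>{1..i}. a (inv_into {1..n} \<tau> j))"

definition iet_J :: "(nat \<Rightarrow> real) \<Rightarrow> nat \<Rightarrow> real set" where
  "iet_J a i = {iet_b a (i - 1) ..< iet_b a i}"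

definition iet_Jt :: "(nat \<Rightarrow> real) \<Rightarrow> nat \<Rightarrow> real set" where
  "iet_Jt a i = {iet_b a (i - 1) <.. iet_b a i}"

definition iet_D :: "nat \<Rightarrow> (nat \<Rightarrow> real) \<Rightarrow> real set" where
  "iet_D n a = iet_b a ` {1..n-1}"

definition iet_T :: "nat \<Rightarrow> (nat \<Rightarrow> real) \<Rightarrow> (nat \<Rightarrow> nat) \<Rightarrow> real \<Rightarrow> real" where
  "iet_T n a \<tau> x = (let i = (THE i. i \<in> {1..n} \<and> x \<in> iet_J a i)
     in x - iet_b a (i - 1) + iet_btau n a \<tau> (\<tau> i - 1))"

definition iet_Tt :: "nat \<Rightarrow> (nat \<Rightarrow> real) \<Rightarrow> (nat \<Rightarrow> nat) \<Rightarrow> real \<Rightarrow> real" where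
  "iet_Tt n a \<tau> x = (let i = (THE i. i \<in> {1..n} \<and> x \<in> iet_Jt a i)
     in x - iet_b a (i - 1) + iet_btau n a \<tau> (\<tau> i - 1))"

definition zpow :: "real set \<Rightarrow> (real \<Rightarrow> real) \<Rightarrow> int \<Rightarrow> real \<Rightarrow> real" where
  "zpow S f k x = (if 0 \<le> k then (f ^^ nat k) x else (inv_into S f ^^ nat (- k)) x)"

definition iet_Tpow :: "nat \<Rightarrow> (nat \<Rightarrow> real) \<Rightarrow> (nat \<Rightarrow> nat) \<Rightarrow> int \<Rightarrow> real \<Rightarrow> real" where
  "iet_Tpow n a \<tau> k = zpow {0..<1} (iet_T n a \<tau>) k"

definition iet_Ttpow :: "nat \<Rightarrow> (nat \<Rightarrow> real) \<Rightarrow> (nat \<Rightarrow> nat) \<Rightarrow> int \<Rightarrow> real \<Rightarrow> real" where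
  "iet_Ttpow n a \<tau> k = zpow {0<..1} (iet_Tt n a \<tau>) k"

definition iet_itin :: "nat \<Rightarrow> (nat \<Rightarrow> real) \<Rightarrow> (nat \<Rightarrow> nat) \<Rightarrow> real \<Rightarrow> int \<Rightarrow> nat" where
  "iet_itin n a \<tau> x k = (THE i. i \<in> {1..n} \<and> iet_Tpow n a \<tau> k x \<in> iet_J a i)"

definition iet_itint :: "nat \<Rightarrow> (nat \<Rightarrow> real) \<Rightarrow> (nat \<Rightarrow> nat) \<Rightarrow> real \<Rightarrow> int \<Rightarrow> nat" where
  "iet_itint n a \<tau> x k = (THE i. i \<in> {1..n} \<and> iet_Ttpow n a \<tau> k x \<in> iet_Jt a i)"

definition iet_Dinf :: "nat \<Rightarrow> (nat \<Rightarrow> real) \<Rightarrow> (nat \<Rightarrow> nat) \<Rightarrow> real set" where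
  "iet_Dinf n a \<tau> = {0, 1} \<union> (\<Union>k::int. iet_Tpow n a \<tau> k ` iet_D n a)"

definition iet_R :: "nat \<Rightarrow> (nat \<Rightarrow> real) \<Rightarrow> (nat \<Rightarrow> nat) \<Rightarrow> real set" where
  "iet_R n a \<tau> = {0..1} - iet_Dinf n a \<tau>"

definition iet_X :: "nat \<Rightarrow> (nat \<Rightarrow> real) \<Rightarrow> (nat \<Rightarrow> nat) \<Rightarrow> (int \<Rightarrow> nat) set" where
  "iet_X n a \<tau> = closure (iet_itin n a \<tau> ` iet_R n a \<tau>)"

end

theory Submission
  imports Defs
begin

text \<open>Both \<open>T\<close> and \<open>T\<^sup>~\<close> are piecewise translations, \<open>T\<close> continuous from the right and
  \<open>T\<^sup>~\<close> from the left. Hence each finite window of \<open>\<I>(x)\<close> is constant for points in some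
  \<open>[x, x + \<delta>)\<close>, and each finite window of \<open>\<I>\<^sup>~(x)\<close> for points in some \<open>(x - \<delta>, x]\<close>. Off the
  countable set \<open>D\<^sub>\<infinity>\<close> the two maps agree along entire orbits, so \<open>\<I> = \<I>\<^sup>~\<close> on \<open>R\<close>. Since \<open>R\<close> is
  dense on both sides of every point, \<open>\<I>(x)\<close> and \<open>\<I>\<^sup>~(x)\<close> lie in \<open>X\<close>. Conversely, an element of
  \<open>X\<close> is the limit of itineraries of points \<open>y\<^sub>m \<in> R\<close>; a monotone subsequence of \<open>y\<^sub>m\<close> converges
  to some \<open>x\<close> from the right or from the left, and the limit is \<open>\<I>(x)\<close> or \<open>\<I>\<^sup>~(x)\<close> accordingly.\<close>

section \<open>Integer iterates of a bijection\<close>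

lemma funpow_in_set: "f ` S \<subseteq> S \<Longrightarrow> x \<in> S \<Longrightarrow> (f ^^ m) x \<in> S"
  by (induction m) auto

lemma zpow_in:
  assumes "bij_betw f S S" "x \<in> S"
  shows "zpow S f k x \<in> S"
proof -
  have "f ` S \<subseteq> S" "inv_into S f ` S \<subseteq> S"
    using assms(1) bij_betw_imp_surj_on bij_betw_inv_into by blast+
  then show ?thesis
    using assms(2) by (simp add: zpow_def funpow_in_set)
qed

lemma zpow_0 [simp]: "zpow S f 0 x = x"
  by (simp add: zpow_def)

lemma zpow_succ:
  assumes f: "bij_betw f S S" and x: "x \<in> S"
  shows "zpow S f (k + 1) x = f (zpow S f k x)"
proof (cases "0 \<le> k")
  case True
  then have "nat (k + 1) = Suc (nat k)" by simp
  with True show ?thesis unfolding zpow_def by simp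
next
  case False
  define m where "m = nat (- k) - 1"
  have "nat (- k) = Suc m" "nat (- (k + 1)) = m" using False m_def by simp_all
  moreover have "(inv_into S f ^^ m) x \<in> S"
    using funpow_in_set[of "inv_into S f" S x m] f x bij_betw_imp_surj_on bij_betw_inv_into by blast
  ultimately show ?thesis
    using False f unfolding zpow_def by (auto simp: f_inv_into_f bij_betw_imp_surj_on)
qed

lemma zpow_pred:
  assumes f: "bij_betw f S S" and x: "x \<in> S"
  shows "zpow S f (k - 1) x = inv_into S f (zpow S f k x)"
  using zpow_succ[OF assms, of "k - 1"] zpow_in[OF assms, of "k - 1"] f
  by (simp add: bij_betw_imp_inj_on inv_into_f_f)

lemma zpow_add:
  assumes f: "bij_betw f S S" and x: "x \<in> S"
  shows "zpow S f j (zpow S f k x) = zpow S f (j + k) x"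
proof (induction j rule: int_induct[where k = 0])
  case base
  show ?case by simp
next
  case (step1 i)
  then show ?case
    using zpow_succ[OF f zpow_in[OF assms], of i] zpow_succ[OF assms, of "i + k"] by (simp add: ac_simps)
next
  case (step2 i)
  then show ?case
    using zpow_pred[OF f zpow_in[OF assms], of i] zpow_pred[OF assms, of "i + k"] by (simp add: algebra_simps)
qed

lemma zpow_fixpoint:
  assumes f: "bij_betw f S S" and x: "x \<in> S" "f x = x"
  shows "zpow S f k x = x"
proof -
  have funpow_fix: "(h ^^ m) x = x" if "h x = x" for h m
    using that by (induction m) simp_all
  have "inv_into S f x = x"
    using x f by (metis bij_betw_imp_inj_on inv_into_f_f)
  then show ?thesis
    using x by (simp add: zpow_def funpow_fix)
qed

lemma zpow_eq_if_agree_on_orbit: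
  assumes f: "bij_betw f S S" and g: "bij_betw g S' S'" and x: "x \<in> S" "x \<in> S'"
    and agree: "\<And>k. zpow S f k x \<in> S' \<and> g (zpow S f k x) = f (zpow S f k x)"
  shows "zpow S f k x = zpow S' g k x"
proof (induction k rule: int_induct[where k = 0])
  case base
  show ?case by simp
next
  case (step1 i)
  then show ?case
    using zpow_succ[OF f x(1)] zpow_succ[OF g x(2)] agree[of i] by simp
next
  case (step2 i)
  have "zpow S' g i x = g (zpow S f (i - 1) x)"
    using step2(2) zpow_succ[OF f x(1), of "i - 1"] agree[of "i - 1"] by simp
  then show ?case
    using zpow_pred[OF g x(2), of i] agree[of "i - 1"] g by (metis bij_betw_imp_inj_on inv_into_f_f)
qed

section \<open>One-sided neighbourhoods and local translations\<close>

text \<open>Unlike \<open>at_right x\<close> and \<open>at_left x\<close>, these filters contain the point \<open>x\<close> itself.\<close>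
definition right_nhds :: "real \<Rightarrow> real filter" where
  "right_nhds x = inf (nhds x) (principal {x..})"

definition left_nhds :: "real \<Rightarrow> real filter" where
  "left_nhds x = inf (nhds x) (principal {..x})"

lemma eventually_right_nhds:
  "eventually P (right_nhds x) \<longleftrightarrow> (\<exists>d>0. \<forall>w. x \<le> w \<longrightarrow> w < x + d \<longrightarrow> P w)"
  unfolding right_nhds_def eventually_inf_principal eventually_nhds_metric dist_real_def
  by (intro ex_cong1 conj_cong refl all_cong1) auto

lemma eventually_left_nhds:
  "eventually P (left_nhds x) \<longleftrightarrow> (\<exists>d>0. \<forall>w. x - d < w \<longrightarrow> w \<le> x \<longrightarrow> P w)"
  unfolding left_nhds_def eventually_inf_principal eventually_nhds_metric dist_real_def
  by (intro ex_cong1 conj_cong refl all_cong1) auto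

lemma all_translate: "(\<forall>w::'a::group_add. P w) \<longleftrightarrow> (\<forall>w. P (w + c))"
  by (metis diff_add_cancel)

definition translation_invariant :: "(real \<Rightarrow> real filter) \<Rightarrow> bool" where
  "translation_invariant F \<longleftrightarrow> (\<forall>x c. F (x + c) = filtermap (\<lambda>w. w + c) (F x))"

lemma translation_invariant_right_nhds: "translation_invariant right_nhds"
  unfolding translation_invariant_def
proof (intro allI filter_eqI)
  fix x c :: real and P
  show "eventually P (right_nhds (x + c)) \<longleftrightarrow> eventually P (filtermap (\<lambda>w. w + c) (right_nhds x))"
    unfolding eventually_filtermap eventually_right_nhds
    by (subst all_translate[of _ c]) (simp add: algebra_simps)
qed

lemma translation_invariant_left_nhds: "translation_invariant left_nhds"
  unfolding translation_invariant_def
proof (intro allI filter_eqI)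
  fix x c :: real and P
  show "eventually P (left_nhds (x + c)) \<longleftrightarrow> eventually P (filtermap (\<lambda>w. w + c) (left_nhds x))"
    unfolding eventually_filtermap eventually_left_nhds
    by (subst all_translate[of _ c]) (simp add: algebra_simps)
qed

lemma eventually_translate:
  assumes "translation_invariant F" "eventually P (F y)"
  shows "eventually (\<lambda>w. P (w + (y - x))) (F x)"
  using assms unfolding translation_invariant_def
  by (metis add_diff_cancel_left' add_diff_eq eventually_filtermap)

lemma eventually_right_nhds_atLeastLessThan_iff:
  "eventually (\<lambda>w. w \<in> {p..<q} \<longleftrightarrow> x \<in> {p..<q}) (right_nhds x)"
proof (cases "x < p \<or> q \<le> x")
  case True
  then show ?thesis
    unfolding eventually_right_nhds by (intro exI[of _ "if x < p then p - x else 1"]) auto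
next
  case False
  then show ?thesis
    unfolding eventually_right_nhds by (intro exI[of _ "q - x"]) auto
qed

lemma eventually_left_nhds_greaterThanAtMost_iff:
  "eventually (\<lambda>w. w \<in> {p<..q} \<longleftrightarrow> x \<in> {p<..q}) (left_nhds x)"
proof (cases "x \<le> p \<or> q < x")
  case True
  then show ?thesis
    unfolding eventually_left_nhds by (intro exI[of _ "if q < x then x - q else 1"]) auto
next
  case False
  then show ?thesis
    unfolding eventually_left_nhds by (intro exI[of _ "x - p"]) auto
qed

definition locally_translation :: "(real \<Rightarrow> real filter) \<Rightarrow> real set \<Rightarrow> (real \<Rightarrow> real) \<Rightarrow> bool" where
  "locally_translation F S f \<longleftrightarrow> (\<forall>z\<in>S. eventually (\<lambda>w. w \<in> S \<and> f w = f z + (w - z)) (F z))"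

lemma locally_translation_cong:
  assumes "\<And>x. x \<in> S \<Longrightarrow> f x = g x"
  shows "locally_translation F S f \<longleftrightarrow> locally_translation F S g"
proof -
  have "(\<lambda>w. w \<in> S \<and> f w = f z + (w - z)) = (\<lambda>w. w \<in> S \<and> g w = g z + (w - z))" if "z \<in> S" for z
    using assms that by auto
  then show ?thesis
    unfolding locally_translation_def by simp
qed

lemma locally_translation_id:
  assumes "locally_translation F S f"
  shows "locally_translation F S id"
  using assms unfolding locally_translation_def by (auto elim: eventually_mono)

lemma locally_translation_comp:
  assumes F: "translation_invariant F"
    and g: "locally_translation F S g" and h: "locally_translation F S h" and hS: "h ` S \<subseteq> S"
  shows "locally_translation F S (g \<circ> h)"
  unfolding locally_translation_def
proof
  fix z assume z: "z \<in> S"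
  have "eventually (\<lambda>w. h z + (w - z) \<in> S \<and> g (h z + (w - z)) = g (h z) + (w - z)) (F z)"
    using eventually_translate[OF F, of _ "h z" z] g hS z unfolding locally_translation_def
    by (fastforce simp: algebra_simps)
  moreover have "eventually (\<lambda>w. w \<in> S \<and> h w = h z + (w - z)) (F z)"
    using h z unfolding locally_translation_def by blast
  ultimately show "eventually (\<lambda>w. w \<in> S \<and> (g \<circ> h) w = (g \<circ> h) z + (w - z)) (F z)"
    by eventually_elim simp
qed

lemma locally_translation_inv_into:
  assumes F: "translation_invariant F" and f: "bij_betw f S S" "locally_translation F S f"
  shows "locally_translation F S (inv_into S f)"
  unfolding locally_translation_def
proof
  fix z assume z: "z \<in> S"
  define u where "u = inv_into S f z"
  have u: "u \<in> S" "f u = z"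
    using z f(1) by (auto simp: u_def bij_betw_def inv_into_into f_inv_into_f)
  have "eventually (\<lambda>w. u + (w - z) \<in> S \<and> f (u + (w - z)) = w) (F z)"
    using eventually_translate[OF F, of _ u z] f(2) u unfolding locally_translation_def
    by (fastforce simp: algebra_simps)
  then show "eventually (\<lambda>w. w \<in> S \<and> inv_into S f w = inv_into S f z + (w - z)) (F z)"
  proof eventually_elim
    case (elim w)
    then have "w \<in> S"
      using f(1) bij_betwE by fastforce
    moreover have "inv_into S f w = u + (w - z)"
      using elim f(1) inv_into_f_f[of f S "u + (w - z)"] by (simp add: bij_betw_def)
    ultimately show ?case
      by (simp add: u_def)
  qed
qed

lemma locally_translation_zpow:
  assumes F: "translation_invariant F" and f: "bij_betw f S S" "locally_translation F S f"
  shows "locally_translation F S (zpow S f k)"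
proof (induction k rule: int_induct[where k = 0])
  case base
  have "zpow S f 0 = id"
    by (simp add: fun_eq_iff)
  then show ?case
    using locally_translation_id[OF f(2)] by (simp only:)
next
  case (step1 i)
  have "locally_translation F S (f \<circ> zpow S f i)"
    using zpow_in[OF f(1)] by (intro locally_translation_comp[OF F f(2) step1(2)]) auto
  moreover have "zpow S f (i + 1) x = (f \<circ> zpow S f i) x" if "x \<in> S" for x
    using zpow_succ[OF f(1) that] by simp
  ultimately show ?case
    using locally_translation_cong by blast
next
  case (step2 i)
  have "locally_translation F S (inv_into S f \<circ> zpow S f i)"
    using zpow_in[OF f(1)]
    by (intro locally_translation_comp[OF F locally_translation_inv_into[OF F f] step2(2)]) auto
  moreover have "zpow S f (i - 1) x = (inv_into S f \<circ> zpow S f i) x" if "x \<in> S" for x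
    using zpow_pred[OF f(1) that] by simp
  ultimately show ?case
    using locally_translation_cong by blast
qed

lemma locally_translation_piecewise:
  assumes S: "S = (\<Union>i\<in>I. A i)"
    and f: "\<And>i x. i \<in> I \<Longrightarrow> x \<in> A i \<Longrightarrow> f x = x + s i"
    and A: "\<And>i z. i \<in> I \<Longrightarrow> eventually (\<lambda>w. w \<in> A i \<longleftrightarrow> z \<in> A i) (F z)"
  shows "locally_translation F S f"
  unfolding locally_translation_def
proof
  fix z assume "z \<in> S"
  then obtain i where i: "i \<in> I" "z \<in> A i"
    using S by blast
  show "eventually (\<lambda>w. w \<in> S \<and> f w = f z + (w - z)) (F z)"
    using A[OF i(1), of z] by eventually_elim (use S f i in auto)
qed

lemma eventually_zpow_membership_eq:
  assumes F: "translation_invariant F" and f: "bij_betw f S S" "locally_translation F S f"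
    and x: "x \<in> S" and I: "finite I" and K: "finite K"
    and A: "\<And>i z. i \<in> I \<Longrightarrow> eventually (\<lambda>w. w \<in> A i \<longleftrightarrow> z \<in> A i) (F z)"
  shows "eventually (\<lambda>w. \<forall>k\<in>K. \<forall>i\<in>I. zpow S f k w \<in> A i \<longleftrightarrow> zpow S f k x \<in> A i) (F x)"
proof (intro eventually_ball_finite[OF K] ballI)
  fix k
  define z where "z = zpow S f k x"
  have "eventually (\<lambda>w. \<forall>i\<in>I. w \<in> A i \<longleftrightarrow> z \<in> A i) (F z)"
    using A by (intro eventually_ball_finite[OF I]) auto
  then have "eventually (\<lambda>w. \<forall>i\<in>I. w + (z - x) \<in> A i \<longleftrightarrow> z \<in> A i) (F x)"
    by (rule eventually_translate[OF F])
  moreover have "eventually (\<lambda>w. w \<in> S \<and> zpow S f k w = z + (w - x)) (F x)"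
    using locally_translation_zpow[OF F f, of k] x unfolding locally_translation_def z_def by blast
  ultimately show "eventually (\<lambda>w. \<forall>i\<in>I. zpow S f k w \<in> A i \<longleftrightarrow> zpow S f k x \<in> A i) (F x)"
    by eventually_elim (simp add: z_def add_diff_eq diff_add_eq add.commute)
qed

lemma frequently_right_nhds_avoiding_countable:
  assumes "countable C" "x < q"
  shows "frequently (\<lambda>y. y \<in> {x<..<q} - C) (right_nhds x)"
  unfolding frequently_def eventually_right_nhds
proof
  assume "\<exists>d>0. \<forall>w. x \<le> w \<longrightarrow> w < x + d \<longrightarrow> \<not> w \<in> {x<..<q} - C"
  then obtain d where d: "d > 0" "\<forall>w. x \<le> w \<longrightarrow> w < x + d \<longrightarrow> \<not> w \<in> {x<..<q} - C"
    by blast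
  have "{x<..<min q (x + d)} \<subseteq> C"
  proof
    fix w assume "w \<in> {x<..<min q (x + d)}"
    then show "w \<in> C"
      using d(2)[rule_format, of w] by auto
  qed
  moreover have "uncountable {x<..<min q (x + d)}"
    using uncountable_open_interval[of x "min q (x + d)"] d(1) assms(2) by simp
  ultimately show False
    using assms(1) countable_subset by blast
qed

lemma frequently_left_nhds_avoiding_countable:
  assumes "countable C" "p < x"
  shows "frequently (\<lambda>y. y \<in> {p<..<x} - C) (left_nhds x)"
  unfolding frequently_def eventually_left_nhds
proof
  assume "\<exists>d>0. \<forall>w. x - d < w \<longrightarrow> w \<le> x \<longrightarrow> \<not> w \<in> {p<..<x} - C"
  then obtain d where d: "d > 0" "\<forall>w. x - d < w \<longrightarrow> w \<le> x \<longrightarrow> \<not> w \<in> {p<..<x} - C"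
    by blast
  have "{max p (x - d)<..<x} \<subseteq> C"
  proof
    fix w assume "w \<in> {max p (x - d)<..<x}"
    then show "w \<in> C"
      using d(2)[rule_format, of w] by auto
  qed
  moreover have "uncountable {max p (x - d)<..<x}"
    using uncountable_open_interval[of "max p (x - d)" x] d(1) assms(2) by simp
  ultimately show False
    using assms(1) countable_subset by blast
qed

lemma filterlim_right_nhds_sequentially:
  "X \<longlonglongrightarrow> x \<Longrightarrow> (\<And>m. x \<le> X m) \<Longrightarrow> filterlim X (right_nhds x) sequentially"
  by (simp add: right_nhds_def filterlim_inf filterlim_principal)

lemma filterlim_left_nhds_sequentially:
  "X \<longlonglongrightarrow> x \<Longrightarrow> (\<And>m. X m \<le> x) \<Longrightarrow> filterlim X (left_nhds x) sequentially"
  by (simp add: left_nhds_def filterlim_inf filterlim_principal)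

section \<open>Finite windows in a product of discrete spaces\<close>

lemma in_closure_fun_discrete_iff:
  fixes \<omega> :: "'i \<Rightarrow> 'a::discrete_topology"
  shows "\<omega> \<in> closure A \<longleftrightarrow> (\<forall>K. finite K \<longrightarrow> (\<exists>s\<in>A. \<forall>k\<in>K. s k = \<omega> k))"
proof safe
  fix K :: "'i set" assume "\<omega> \<in> closure A" "finite K"
  moreover have "open {f. \<forall>k\<in>K. f (id k) \<in> {\<omega> k}}"
    using \<open>finite K\<close> by (intro product_topology_basis') (auto intro: open_discrete)
  ultimately show "\<exists>s\<in>A. \<forall>k\<in>K. s k = \<omega> k"
    unfolding closure_iff_nhds_not_empty by fastforce
next
  assume agree: "\<forall>K. finite K \<longrightarrow> (\<exists>s\<in>A. \<forall>k\<in>K. s k = \<omega> k)"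
  show "\<omega> \<in> closure A"
    unfolding closure_iff_nhds_not_empty
  proof (intro allI impI)
    fix U V :: "('i \<Rightarrow> 'a) set"
    assume "V \<subseteq> U" "open V" "\<omega> \<in> V"
    then obtain X where X: "\<omega> \<in> (\<Pi>\<^sub>E k\<in>UNIV. X k)" "finite {k. X k \<noteq> UNIV}" "(\<Pi>\<^sub>E k\<in>UNIV. X k) \<subseteq> V"
      using product_topology_open_contains_basis[of "\<lambda>_. euclidean" UNIV V \<omega>]
      by (auto simp: open_fun_def)
    then obtain s where s: "s \<in> A" "\<forall>k\<in>{k. X k \<noteq> UNIV}. s k = \<omega> k"
      using agree by blast
    have "s k \<in> X k" for k
      using X(1) s(2) by (cases "X k = UNIV") (auto simp: PiE_UNIV_domain)
    then have "s \<in> (\<Pi>\<^sub>E k\<in>UNIV. X k)"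
      by (simp add: PiE_UNIV_domain)
    then show "A \<inter> U \<noteq> {}"
      using s(1) X(3) \<open>V \<subseteq> U\<close> by blast
  qed
qed

lemma eq_if_eventually_agree:
  assumes "\<And>m k. \<bar>k\<bar> \<le> int m \<Longrightarrow> s m k = \<omega> k" "\<And>k. eventually (\<lambda>m. s m k = \<sigma> k) sequentially"
  shows "\<omega> = \<sigma>"
proof
  fix k
  have "eventually (\<lambda>m. nat \<bar>k\<bar> \<le> m \<and> s m k = \<sigma> k) sequentially"
    using eventually_ge_at_top assms(2) by (rule eventually_conj)
  then obtain N where "nat \<bar>k\<bar> \<le> N" "s N k = \<sigma> k"
    unfolding eventually_sequentially by blast
  then show "\<omega> k = \<sigma> k"
    using assms(1)[of k N] by simp
qed

section \<open>The partition of the unit interval\<close>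

lemma iet_b_0 [simp]: "iet_b c 0 = 0"
  by (simp add: iet_b_def)

lemma iet_b_pred: "1 \<le> i \<Longrightarrow> iet_b c i = iet_b c (i - 1) + c i"
  by (cases i) (simp_all add: iet_b_def)

locale iet_lengths =
  fixes n :: nat and c :: "nat \<Rightarrow> real"
  assumes lengths_pos: "\<And>i. i \<in> {1..n} \<Longrightarrow> c i > 0"
    and total_length: "iet_b c n = 1"
begin

lemma iet_b_mono: "i \<le> j \<Longrightarrow> j \<le> n \<Longrightarrow> iet_b c i \<le> iet_b c j"
  unfolding iet_b_def using lengths_pos by (intro sum_mono2) (auto intro: less_imp_le)

lemma iet_b_bounds: "i \<le> n \<Longrightarrow> 0 \<le> iet_b c i \<and> iet_b c i \<le> 1"
  using iet_b_mono[of 0 i] iet_b_mono[of i n] total_length by simp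

lemma UN_iet_J: "(\<Union>i\<in>{1..n}. iet_J c i) = {0..<1}"
proof (intro equalityI subsetI)
  fix x assume "x \<in> (\<Union>i\<in>{1..n}. iet_J c i)"
  then obtain i where "i \<in> {1..n}" "x \<in> iet_J c i"
    by blast
  moreover have "i - 1 \<le> n"
    using \<open>i \<in> {1..n}\<close> by auto
  ultimately show "x \<in> {0..<1}"
    using iet_b_bounds[of i] iet_b_bounds[of "i - 1"] by (auto simp: iet_J_def)
next
  fix x :: real assume x: "x \<in> {0..<1}"
  define i where "i = (LEAST i. x < iet_b c i)"
  have "x < iet_b c n"
    using x total_length by simp
  then have "x < iet_b c i" "i \<le> n"
    unfolding i_def by (auto intro: LeastI Least_le)
  moreover have "i \<noteq> 0"
    using \<open>x < iet_b c i\<close> x by (intro notI) simp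
  moreover have "iet_b c (i - 1) \<le> x"
    using not_less_Least[of "i - 1" "\<lambda>i. x < iet_b c i"] \<open>i \<noteq> 0\<close> unfolding i_def by simp
  ultimately show "x \<in> (\<Union>i\<in>{1..n}. iet_J c i)"
    by (auto simp: iet_J_def)
qed

lemma UN_iet_Jt: "(\<Union>i\<in>{1..n}. iet_Jt c i) = {0<..1}"
proof (intro equalityI subsetI)
  fix x assume "x \<in> (\<Union>i\<in>{1..n}. iet_Jt c i)"
  then obtain i where "i \<in> {1..n}" "x \<in> iet_Jt c i"
    by blast
  moreover have "i - 1 \<le> n"
    using \<open>i \<in> {1..n}\<close> by auto
  ultimately show "x \<in> {0<..1}"
    using iet_b_bounds[of i] iet_b_bounds[of "i - 1"] by (auto simp: iet_Jt_def)
next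
  fix x :: real assume x: "x \<in> {0<..1}"
  define i where "i = (LEAST i. x \<le> iet_b c i)"
  have "x \<le> iet_b c n"
    using x total_length by simp
  then have "x \<le> iet_b c i" "i \<le> n"
    unfolding i_def by (auto intro: LeastI Least_le)
  moreover have "i \<noteq> 0"
    using \<open>x \<le> iet_b c i\<close> x by (intro notI) simp
  moreover have "iet_b c (i - 1) < x"
    using not_less_Least[of "i - 1" "\<lambda>i. x \<le> iet_b c i"] \<open>i \<noteq> 0\<close> unfolding i_def by simp
  ultimately show "x \<in> (\<Union>i\<in>{1..n}. iet_Jt c i)"
    by (auto simp: iet_Jt_def)
qed

lemma iet_b_in_iet_J: "i \<in> {1..n} \<Longrightarrow> iet_b c (i - 1) \<in> iet_J c i"
  using lengths_pos iet_b_pred[of i c] by (simp add: iet_J_def)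

lemma iet_D_subset: "iet_D n c \<subseteq> {0..<1}"
proof
  fix d assume "d \<in> iet_D n c"
  then obtain j where "j \<in> {1..n - 1}" "d = iet_b c j"
    unfolding iet_D_def by blast
  then have "d \<in> iet_J c (Suc j)" "Suc j \<in> {1..n}"
    using iet_b_in_iet_J[of "Suc j"] by auto
  then show "d \<in> {0..<1}"
    using UN_iet_J by blast
qed

lemma iet_b_separates:
  assumes "i \<in> {1..n}" "j \<in> {1..n}" "i \<noteq> j"
  shows "iet_b c i \<le> iet_b c (j - 1) \<or> iet_b c j \<le> iet_b c (i - 1)"
  using assms iet_b_mono by (cases "i < j") auto

lemma disjoint_iet_J: "disjoint_family_on (iet_J c) {1..n}"
  unfolding disjoint_family_on_def
proof (intro ballI impI)
  fix i j assume "i \<in> {1..n}" "j \<in> {1..n}" "i \<noteq> j"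
  then have "iet_b c i \<le> iet_b c (j - 1) \<or> iet_b c j \<le> iet_b c (i - 1)"
    by (rule iet_b_separates)
  then show "iet_J c i \<inter> iet_J c j = {}"
    by (auto simp: iet_J_def)
qed

lemma disjoint_iet_Jt: "disjoint_family_on (iet_Jt c) {1..n}"
  unfolding disjoint_family_on_def
proof (intro ballI impI)
  fix i j assume "i \<in> {1..n}" "j \<in> {1..n}" "i \<noteq> j"
  then have "iet_b c i \<le> iet_b c (j - 1) \<or> iet_b c j \<le> iet_b c (i - 1)"
    by (rule iet_b_separates)
  then show "iet_Jt c i \<inter> iet_Jt c j = {}"
    by (auto simp: iet_Jt_def)
qed

end

lemma the_index_eq:
  assumes "disjoint_family_on A I" "i \<in> I" "x \<in> A i"
  shows "(THE j. j \<in> I \<and> x \<in> A j) = i"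
  using assms by (intro the_equality) (auto simp: disjoint_family_on_def)

lemma the_cong_on:
  "(\<And>i. i \<in> I \<Longrightarrow> P i \<longleftrightarrow> Q i) \<Longrightarrow> (THE i. i \<in> I \<and> P i) = (THE i. i \<in> I \<and> Q i)"
  by (rule arg_cong[where f = The]) auto

lemma bij_betw_glue:
  assumes \<sigma>: "bij_betw \<sigma> I I"
    and A: "S = (\<Union>i\<in>I. A i)" and B: "S = (\<Union>i\<in>I. B i)" "disjoint_family_on B I"
    and f: "\<And>i. i \<in> I \<Longrightarrow> bij_betw f (A i) (B (\<sigma> i))"
  shows "bij_betw f S S"
  unfolding bij_betw_def
proof
  show "inj_on f S"
  proof (rule inj_onI)
    fix x y assume "x \<in> S" "y \<in> S" and fxy: "f x = f y"
    then obtain i j where i: "i \<in> I" "x \<in> A i" and j: "j \<in> I" "y \<in> A j"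
      using A by blast
    have "f x \<in> B (\<sigma> i)" "f y \<in> B (\<sigma> j)"
      using bij_betwE[OF f[OF i(1)]] bij_betwE[OF f[OF j(1)]] i(2) j(2) by simp_all
    moreover have "\<sigma> i \<in> I" "\<sigma> j \<in> I"
      using bij_betwE[OF \<sigma>] i(1) j(1) by simp_all
    ultimately have "\<sigma> i = \<sigma> j"
      using B(2) fxy unfolding disjoint_family_on_def by auto
    then have "i = j"
      using bij_betw_imp_inj_on[OF \<sigma>] i(1) j(1) by (simp add: inj_on_eq_iff)
    then show "x = y"
      using bij_betw_imp_inj_on[OF f[OF i(1)]] i(2) j(2) fxy by (simp add: inj_on_eq_iff)
  qed
  have "f ` S = (\<Union>i\<in>I. f ` A i)"
    using A by (simp add: image_UN)
  also have "\<dots> = (\<Union>i\<in>I. B (\<sigma> i))"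
    using f by (intro SUP_cong refl) (simp add: bij_betw_imp_surj_on)
  also have "\<dots> = (\<Union>j\<in>\<sigma> ` I. B j)"
    by simp
  also have "\<dots> = S"
    using B(1) bij_betw_imp_surj_on[OF \<sigma>] by simp
  finally show "f ` S = S" .
qed

lemma bij_betw_translate: "bij_betw (\<lambda>x. x + c) A ((\<lambda>x::real. x + c) ` A)"
  by (rule bij_betw_imageI) (auto simp: inj_on_def)

section \<open>The two exchange maps\<close>

locale iet =
  fixes n :: nat and a :: "nat \<Rightarrow> real" and \<tau> :: "nat \<Rightarrow> nat"
  assumes lengths_pos: "\<And>i. i \<in> {1..n} \<Longrightarrow> a i > 0"
    and lengths_sum: "(\<Sum>i\<in>{1..n}. a i) = 1"
    and perm: "\<tau> permutes {1..n}"
begin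

text \<open>The lengths of the intervals in the order in which \<open>T\<close> lays them out.\<close>
definition a\<^sub>\<tau> :: "nat \<Rightarrow> real" where
  "a\<^sub>\<tau> j = a (inv_into {1..n} \<tau> j)"

definition shift :: "nat \<Rightarrow> real" where
  "shift i = iet_b a\<^sub>\<tau> (\<tau> i - 1) - iet_b a (i - 1)"

lemma bij_tau: "bij_betw \<tau> {1..n} {1..n}"
  using perm permutes_imp_bij by blast

lemma a\<^sub>\<tau>_tau: "i \<in> {1..n} \<Longrightarrow> a\<^sub>\<tau> (\<tau> i) = a i"
  using bij_tau by (simp add: a\<^sub>\<tau>_def bij_betw_imp_inj_on inv_into_f_f)

lemma iet_btau_eq: "iet_btau n a \<tau> = iet_b a\<^sub>\<tau>"
  by (simp add: fun_eq_iff iet_btau_def iet_b_def a\<^sub>\<tau>_def)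

sublocale A: iet_lengths n a
  by unfold_locales (use lengths_pos lengths_sum in \<open>simp_all add: iet_b_def\<close>)

sublocale A\<^sub>\<tau>: iet_lengths n a\<^sub>\<tau>
proof
  show "a\<^sub>\<tau> j > 0" if "j \<in> {1..n}" for j
    using lengths_pos bij_betwE[OF bij_betw_inv_into[OF bij_tau]] that by (simp add: a\<^sub>\<tau>_def)
  have "iet_b a\<^sub>\<tau> n = (\<Sum>j\<in>{1..n}. a (inv_into {1..n} \<tau> j))"
    by (simp add: iet_b_def a\<^sub>\<tau>_def)
  also have "\<dots> = 1"
    using lengths_sum sum.reindex_bij_betw[OF bij_betw_inv_into[OF bij_tau], of a] by simp
  finally show "iet_b a\<^sub>\<tau> n = 1" .
qed

lemma iet_T_eq: "i \<in> {1..n} \<Longrightarrow> x \<in> iet_J a i \<Longrightarrow> iet_T n a \<tau> x = x + shift i"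
  using the_index_eq[OF A.disjoint_iet_J] by (simp add: iet_T_def iet_btau_eq shift_def)

lemma iet_Tt_eq: "i \<in> {1..n} \<Longrightarrow> x \<in> iet_Jt a i \<Longrightarrow> iet_Tt n a \<tau> x = x + shift i"
  using the_index_eq[OF A.disjoint_iet_Jt] by (simp add: iet_Tt_def iet_btau_eq shift_def)

lemma shift_iet_b:
  assumes "i \<in> {1..n}"
  shows "iet_b a (i - 1) + shift i = iet_b a\<^sub>\<tau> (\<tau> i - 1)"
    and "iet_b a i + shift i = iet_b a\<^sub>\<tau> (\<tau> i)"
proof -
  have "\<tau> i \<in> {1..n}"
    using assms bij_tau bij_betwE by blast
  then show "iet_b a (i - 1) + shift i = iet_b a\<^sub>\<tau> (\<tau> i - 1)"
    "iet_b a i + shift i = iet_b a\<^sub>\<tau> (\<tau> i)"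
    using assms iet_b_pred[of i a] iet_b_pred[of "\<tau> i" a\<^sub>\<tau>] a\<^sub>\<tau>_tau[OF assms]
    by (simp_all add: shift_def)
qed

lemma bij_iet_T: "bij_betw (iet_T n a \<tau>) {0..<1} {0..<1}"
proof (rule bij_betw_glue[OF bij_tau A.UN_iet_J[symmetric] A\<^sub>\<tau>.UN_iet_J[symmetric] A\<^sub>\<tau>.disjoint_iet_J])
  fix i assume i: "i \<in> {1..n}"
  have "(\<lambda>x. x + shift i) ` iet_J a i = iet_J a\<^sub>\<tau> (\<tau> i)"
    using shift_iet_b[OF i] by (simp add: iet_J_def)
  then have "bij_betw (\<lambda>x. x + shift i) (iet_J a i) (iet_J a\<^sub>\<tau> (\<tau> i))"
    using bij_betw_translate[of "shift i" "iet_J a i"] by simp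
  then show "bij_betw (iet_T n a \<tau>) (iet_J a i) (iet_J a\<^sub>\<tau> (\<tau> i))"
    by (subst bij_betw_cong[where g = "\<lambda>x. x + shift i"]) (simp_all add: iet_T_eq[OF i])
qed

lemma bij_iet_Tt: "bij_betw (iet_Tt n a \<tau>) {0<..1} {0<..1}"
proof (rule bij_betw_glue[OF bij_tau A.UN_iet_Jt[symmetric] A\<^sub>\<tau>.UN_iet_Jt[symmetric] A\<^sub>\<tau>.disjoint_iet_Jt])
  fix i assume i: "i \<in> {1..n}"
  have "(\<lambda>x. x + shift i) ` iet_Jt a i = iet_Jt a\<^sub>\<tau> (\<tau> i)"
    using shift_iet_b[OF i] image_add_greaterThanAtMost[of "shift i"]
    by (simp add: iet_Jt_def add.commute)
  then have "bij_betw (\<lambda>x. x + shift i) (iet_Jt a i) (iet_Jt a\<^sub>\<tau> (\<tau> i))"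
    using bij_betw_translate[of "shift i" "iet_Jt a i"] by simp
  then show "bij_betw (iet_Tt n a \<tau>) (iet_Jt a i) (iet_Jt a\<^sub>\<tau> (\<tau> i))"
    by (subst bij_betw_cong[where g = "\<lambda>x. x + shift i"]) (simp_all add: iet_Tt_eq[OF i])
qed

lemma locally_translation_iet_T: "locally_translation right_nhds {0..<1} (iet_T n a \<tau>)"
  using A.UN_iet_J[symmetric] iet_T_eq eventually_right_nhds_atLeastLessThan_iff
  unfolding iet_J_def by (rule locally_translation_piecewise)

lemma locally_translation_iet_Tt: "locally_translation left_nhds {0<..1} (iet_Tt n a \<tau>)"
  using A.UN_iet_Jt[symmetric] iet_Tt_eq eventually_left_nhds_greaterThanAtMost_iff
  unfolding iet_Jt_def by (rule locally_translation_piecewise)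

lemma eventually_iet_itin_eq:
  assumes "x \<in> {0..<1}" "finite K"
  shows "eventually (\<lambda>w. \<forall>k\<in>K. iet_itin n a \<tau> w k = iet_itin n a \<tau> x k) (right_nhds x)"
proof -
  have "eventually (\<lambda>w. \<forall>k\<in>K. \<forall>i\<in>{1..n}.
      iet_Tpow n a \<tau> k w \<in> iet_J a i \<longleftrightarrow> iet_Tpow n a \<tau> k x \<in> iet_J a i) (right_nhds x)"
    unfolding iet_Tpow_def iet_J_def using assms eventually_right_nhds_atLeastLessThan_iff
    by (intro eventually_zpow_membership_eq[OF translation_invariant_right_nhds bij_iet_T
          locally_translation_iet_T]) auto
  then show ?thesis
    unfolding iet_itin_def by eventually_elim (intro ballI the_cong_on, blast)
qed

lemma eventually_iet_itint_eq:
  assumes "x \<in> {0<..1}" "finite K"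
  shows "eventually (\<lambda>w. \<forall>k\<in>K. iet_itint n a \<tau> w k = iet_itint n a \<tau> x k) (left_nhds x)"
proof -
  have "eventually (\<lambda>w. \<forall>k\<in>K. \<forall>i\<in>{1..n}.
      iet_Ttpow n a \<tau> k w \<in> iet_Jt a i \<longleftrightarrow> iet_Ttpow n a \<tau> k x \<in> iet_Jt a i) (left_nhds x)"
    unfolding iet_Ttpow_def iet_Jt_def using assms eventually_left_nhds_greaterThanAtMost_iff
    by (intro eventually_zpow_membership_eq[OF translation_invariant_left_nhds bij_iet_Tt
          locally_translation_iet_Tt]) auto
  then show ?thesis
    unfolding iet_itint_def by eventually_elim (intro ballI the_cong_on, blast)
qed

lemma countable_iet_Dinf: "countable (iet_Dinf n a \<tau>)"
  unfolding iet_Dinf_def iet_D_def by (intro countable_Un countable_UN) auto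

lemma iet_R_eq: "iet_R n a \<tau> = {0<..<1} - iet_Dinf n a \<tau>"
  by (auto simp: iet_R_def iet_Dinf_def)

lemma regular_iet_J_iff:
  assumes z: "z \<in> {0<..<1} - iet_D n a" and i: "i \<in> {1..n}"
  shows "z \<in> iet_J a i \<longleftrightarrow> z \<in> iet_Jt a i"
proof -
  have not_endpoint: "z \<noteq> iet_b a j" if "j \<le> n" for j
    using z that A.total_length by (cases "j = 0 \<or> j = n") (auto simp: iet_D_def)
  have "i \<le> n"
    using i by simp
  then have "z \<noteq> iet_b a (i - 1)" "z \<noteq> iet_b a i"
    by (simp_all add: not_endpoint)
  then show ?thesis
    by (auto simp: iet_J_def iet_Jt_def)
qed

lemma iet_T_eq_Tt_regular:
  assumes z: "z \<in> {0<..<1} - iet_D n a"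
  shows "iet_T n a \<tau> z = iet_Tt n a \<tau> z"
proof -
  have "z \<in> {0..<1}"
    using z by simp
  then obtain i where i: "i \<in> {1..n}" "z \<in> iet_J a i"
    using A.UN_iet_J by blast
  then have "z \<in> iet_Jt a i"
    using regular_iet_J_iff[OF z] by blast
  then show ?thesis
    using iet_T_eq[OF i] iet_Tt_eq[OF i(1)] by simp
qed

text \<open>So the orbit of \<open>0\<close> lies in \<open>D\<^sub>\<infinity>\<close>, and orbits of points of \<open>R\<close> avoid \<open>0\<close>.\<close>
lemma iet_T_hits_zero: "\<exists>d \<in> insert 0 (iet_D n a). iet_T n a \<tau> d = 0"
proof -
  have "n \<noteq> 0"
    using A.total_length by (intro notI) simp
  define j where "j = inv_into {1..n} \<tau> 1"
  have one: "1 \<in> {1..n}"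
    using \<open>n \<noteq> 0\<close> by simp
  have j: "j \<in> {1..n}" "\<tau> j = 1"
    using bij_betwE[OF bij_betw_inv_into[OF bij_tau]] one bij_tau
    by (auto simp: j_def bij_betw_def f_inv_into_f)
  have "iet_T n a \<tau> (iet_b a (j - 1)) = 0"
    using iet_T_eq[OF j(1) A.iet_b_in_iet_J[OF j(1)]] shift_iet_b(1)[OF j(1)] j(2) by simp
  moreover have "iet_b a (j - 1) \<in> insert 0 (iet_D n a)"
  proof (cases "j = 1")
    case False
    then have "j - 1 \<in> {1..n - 1}"
      using j by auto
    then show ?thesis
      by (simp add: iet_D_def)
  qed simp
  ultimately show ?thesis
    by blast
qed

lemma iet_Tpow_in: "x \<in> {0..<1} \<Longrightarrow> iet_Tpow n a \<tau> k x \<in> {0..<1}"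
  unfolding iet_Tpow_def by (rule zpow_in[OF bij_iet_T])

lemma iet_Tpow_add: "x \<in> {0..<1} \<Longrightarrow> iet_Tpow n a \<tau> j (iet_Tpow n a \<tau> k x) = iet_Tpow n a \<tau> (j + k) x"
  unfolding iet_Tpow_def by (rule zpow_add[OF bij_iet_T])

lemma iet_Tpow_R_notin_D:
  assumes y: "y \<in> iet_R n a \<tau>"
  shows "iet_Tpow n a \<tau> k y \<notin> iet_D n a"
proof
  assume "iet_Tpow n a \<tau> k y \<in> iet_D n a"
  moreover have "y = iet_Tpow n a \<tau> (- k) (iet_Tpow n a \<tau> k y)"
    using y iet_Tpow_add[of y "- k" k] by (simp add: iet_R_eq iet_Tpow_def)
  ultimately have "y \<in> iet_Dinf n a \<tau>"
    unfolding iet_Dinf_def by blast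
  then show False
    using y by (simp add: iet_R_eq)
qed

lemma iet_Tpow_R_nonzero:
  assumes y: "y \<in> iet_R n a \<tau>"
  shows "iet_Tpow n a \<tau> k y \<noteq> 0"
proof
  assume zero: "iet_Tpow n a \<tau> k y = 0"
  have yS: "y \<in> {0..<1}" and y_notin: "y \<notin> iet_Dinf n a \<tau>"
    using y by (auto simp: iet_R_eq)
  have y_eq: "y = iet_Tpow n a \<tau> (- k) 0"
    using iet_Tpow_add[OF yS, of "- k" k] zero by (simp add: iet_Tpow_def)
  obtain d where d: "d \<in> insert 0 (iet_D n a)" "iet_T n a \<tau> d = 0"
    using iet_T_hits_zero by blast
  show False
  proof (cases "d = 0")
    case True
    then have "y = 0"
      using zpow_fixpoint[OF bij_iet_T _ d(2)[unfolded True]] y_eq by (simp add: iet_Tpow_def)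
    then show False
      using y_notin by (simp add: iet_Dinf_def)
  next
    case False
    then have dD: "d \<in> iet_D n a"
      using d(1) by simp
    then have dS: "d \<in> {0..<1}"
      using A.iet_D_subset by blast
    have "y = iet_Tpow n a \<tau> (- k) (iet_Tpow n a \<tau> 1 d)"
      using y_eq d(2) zpow_succ[OF bij_iet_T dS, of 0] by (simp add: iet_Tpow_def)
    also have "\<dots> = iet_Tpow n a \<tau> (1 - k) d"
      using iet_Tpow_add[OF dS] by simp
    finally show False
      using y_notin dD unfolding iet_Dinf_def by blast
  qed
qed

lemma iet_Tpow_regular:
  assumes y: "y \<in> iet_R n a \<tau>"
  shows "iet_Tpow n a \<tau> k y \<in> {0<..<1} - iet_D n a"
proof -
  have "iet_Tpow n a \<tau> k y \<in> {0..<1}"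
    using y by (intro iet_Tpow_in) (simp add: iet_R_eq)
  then show ?thesis
    using iet_Tpow_R_notin_D[OF y, of k] iet_Tpow_R_nonzero[OF y, of k] by auto
qed

lemma iet_Tpow_eq_Ttpow:
  assumes y: "y \<in> iet_R n a \<tau>"
  shows "iet_Tpow n a \<tau> k y = iet_Ttpow n a \<tau> k y"
proof -
  have agree: "iet_Tpow n a \<tau> k y \<in> {0<..1} \<and>
      iet_Tt n a \<tau> (iet_Tpow n a \<tau> k y) = iet_T n a \<tau> (iet_Tpow n a \<tau> k y)" for k
    using iet_Tpow_regular[OF y, of k] iet_T_eq_Tt_regular by auto
  have "y \<in> {0..<1}" "y \<in> {0<..1}"
    using y by (auto simp: iet_R_eq)
  from zpow_eq_if_agree_on_orbit[OF bij_iet_T bij_iet_Tt this agree[unfolded iet_Tpow_def]]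
  show ?thesis
    unfolding iet_Tpow_def iet_Ttpow_def .
qed

lemma iet_itin_eq_itint:
  assumes y: "y \<in> iet_R n a \<tau>"
  shows "iet_itin n a \<tau> y = iet_itint n a \<tau> y"
  unfolding iet_itin_def iet_itint_def iet_Tpow_eq_Ttpow[OF y, symmetric]
proof (rule ext, rule the_cong_on)
  fix k i assume "i \<in> {1..n}"
  then show "iet_Tpow n a \<tau> k y \<in> iet_J a i \<longleftrightarrow> iet_Tpow n a \<tau> k y \<in> iet_Jt a i"
    by (rule regular_iet_J_iff[OF iet_Tpow_regular[OF y]])
qed

lemma iet_itin_in_X:
  assumes x: "x \<in> {0..<1}"
  shows "iet_itin n a \<tau> x \<in> iet_X n a \<tau>"
  unfolding iet_X_def in_closure_fun_discrete_iff
proof (intro allI impI)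
  fix K :: "int set" assume "finite K"
  have "frequently (\<lambda>y. y \<in> {x<..<1} - iet_Dinf n a \<tau>) (right_nhds x)"
    using x by (intro frequently_right_nhds_avoiding_countable countable_iet_Dinf) simp
  then have "frequently (\<lambda>y. y \<in> iet_R n a \<tau> \<and> (\<forall>k\<in>K. iet_itin n a \<tau> y k = iet_itin n a \<tau> x k))
      (right_nhds x)"
    by (rule frequently_rev_mp)
      (use eventually_iet_itin_eq[OF x \<open>finite K\<close>] in \<open>eventually_elim, use x in \<open>auto simp: iet_R_eq\<close>\<close>)
  then show "\<exists>s\<in>iet_itin n a \<tau> ` iet_R n a \<tau>. \<forall>k\<in>K. s k = iet_itin n a \<tau> x k"
    by (auto dest: frequently_ex)
qed

lemma iet_itint_in_X:
  assumes x: "x \<in> {0<..1}"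
  shows "iet_itint n a \<tau> x \<in> iet_X n a \<tau>"
  unfolding iet_X_def in_closure_fun_discrete_iff
proof (intro allI impI)
  fix K :: "int set" assume "finite K"
  have "frequently (\<lambda>y. y \<in> {0<..<x} - iet_Dinf n a \<tau>) (left_nhds x)"
    using x by (intro frequently_left_nhds_avoiding_countable countable_iet_Dinf) simp
  then have "frequently (\<lambda>y. y \<in> iet_R n a \<tau> \<and> (\<forall>k\<in>K. iet_itint n a \<tau> y k = iet_itint n a \<tau> x k))
      (left_nhds x)"
    by (rule frequently_rev_mp)
      (use eventually_iet_itint_eq[OF x \<open>finite K\<close>] in \<open>eventually_elim, use x in \<open>auto simp: iet_R_eq\<close>\<close>)
  then show "\<exists>s\<in>iet_itin n a \<tau> ` iet_R n a \<tau>. \<forall>k\<in>K. s k = iet_itint n a \<tau> x k"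
    by (auto dest!: frequently_ex simp: iet_itin_eq_itint)
qed

lemma iet_itin_eq_if_tendsto_right:
  assumes x: "x \<in> {0..<1}" and z: "filterlim z (right_nhds x) sequentially"
    and agree: "\<And>m k. \<bar>k\<bar> \<le> int m \<Longrightarrow> iet_itin n a \<tau> (z m) k = \<omega> k"
  shows "\<omega> = iet_itin n a \<tau> x"
proof (rule eq_if_eventually_agree[OF agree])
  fix k
  show "eventually (\<lambda>m. iet_itin n a \<tau> (z m) k = iet_itin n a \<tau> x k) sequentially"
    using eventually_compose_filterlim[OF eventually_iet_itin_eq[OF x, of "{k}"] z] by simp
qed

lemma iet_itint_eq_if_tendsto_left:
  assumes x: "x \<in> {0<..1}" and z: "filterlim z (left_nhds x) sequentially" "\<And>m. z m \<in> iet_R n a \<tau>"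
    and agree: "\<And>m k. \<bar>k\<bar> \<le> int m \<Longrightarrow> iet_itin n a \<tau> (z m) k = \<omega> k"
  shows "\<omega> = iet_itint n a \<tau> x"
proof (rule eq_if_eventually_agree[OF agree])
  fix k
  show "eventually (\<lambda>m. iet_itin n a \<tau> (z m) k = iet_itint n a \<tau> x k) sequentially"
    using eventually_compose_filterlim[OF eventually_iet_itint_eq[OF x, of "{k}"] z(1)]
    by (simp add: iet_itin_eq_itint[OF z(2)])
qed

lemma iet_X_monotone_approximation:
  assumes "\<omega> \<in> iet_X n a \<tau>"
  obtains z where "\<And>m. z m \<in> iet_R n a \<tau>" "monoseq z"
    "\<And>m k. \<bar>k\<bar> \<le> int m \<Longrightarrow> iet_itin n a \<tau> (z m) k = \<omega> k"
proof -
  have "\<exists>y\<in>iet_R n a \<tau>. \<forall>k\<in>{- int m..int m}. iet_itin n a \<tau> y k = \<omega> k" for m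
    using assms unfolding iet_X_def in_closure_fun_discrete_iff by blast
  then obtain y where yR: "\<And>m. y m \<in> iet_R n a \<tau>"
    and y_agree: "\<And>m k. \<bar>k\<bar> \<le> int m \<Longrightarrow> iet_itin n a \<tau> (y m) k = \<omega> k"
    by (metis abs_le_iff atLeastAtMost_iff minus_le_iff)
  obtain r where r: "strict_mono r" "monoseq (y \<circ> r)"
    using seq_monosub[of y] by (auto simp: comp_def)
  have "iet_itin n a \<tau> ((y \<circ> r) m) k = \<omega> k" if "\<bar>k\<bar> \<le> int m" for m k
    using that seq_suble[OF r(1), of m] y_agree[of k "r m"] by simp
  then show ?thesis
    using that[of "y \<circ> r"] yR r(2) by simp
qed

lemma iet_X_subset:
  assumes "\<omega> \<in> iet_X n a \<tau>"
  shows "\<omega> \<in> iet_itin n a \<tau> ` {0..<1} \<union> iet_itint n a \<tau> ` {0<..1}"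
proof -
  obtain z where zR: "\<And>m. z m \<in> iet_R n a \<tau>" and mono: "monoseq z"
    and z_agree: "\<And>m k. \<bar>k\<bar> \<le> int m \<Longrightarrow> iet_itin n a \<tau> (z m) k = \<omega> k"
    using iet_X_monotone_approximation[OF assms] by blast
  have z01: "0 < z m" "z m < 1" for m
    using zR[of m] by (auto simp: iet_R_eq)
  have "Bseq z"
    using z01 by (intro BseqI'[of _ 1]) (simp add: less_imp_le)
  then obtain x where lim: "z \<longlonglongrightarrow> x"
    using Bseq_monoseq_convergent mono convergent_def by blast
  have x01: "0 \<le> x" "x \<le> 1"
    using LIMSEQ_le_const[OF lim, of 0] LIMSEQ_le_const2[OF lim, of 1] z01 less_imp_le by blast+
  from mono have "incseq z \<or> decseq z"
    by (simp add: monoseq_iff)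
  then show ?thesis
  proof
    assume "incseq z"
    then have below: "z m \<le> x" for m
      using incseq_le lim by blast
    have x: "x \<in> {0<..1}"
      using below[of 0] z01(1)[of 0] x01 by auto
    then have "\<omega> = iet_itint n a \<tau> x"
      using lim below zR z_agree by (intro iet_itint_eq_if_tendsto_left filterlim_left_nhds_sequentially)
    then show ?thesis
      using x by blast
  next
    assume "decseq z"
    then have above: "x \<le> z m" for m
      using decseq_ge lim by blast
    have x: "x \<in> {0..<1}"
      using above[of 0] z01(2)[of 0] x01 by auto
    then have "\<omega> = iet_itin n a \<tau> x"
      using lim above z_agree by (intro iet_itin_eq_if_tendsto_right filterlim_right_nhds_sequentially)
    then show ?thesis
      using x by blast
  qed
qed

end

theorem theorem4p2:
  fixes n :: nat and a :: "nat \<Rightarrow> real" and \<tau> :: "nat \<Rightarrow> nat"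
  assumes "n \<ge> 2"
    and "\<And>i. i \<in> {1..n} \<Longrightarrow> a i > 0"
    and "(\<Sum>i\<in>{1..n}. a i) = 1"
    and "\<tau> permutes {1..n}"
  shows "iet_X n a \<tau> = iet_itin n a \<tau> ` {0..<1} \<union> iet_itint n a \<tau> ` {0<..1}"
proof -
  interpret iet n a \<tau>
    using assms(2-4) by unfold_locales
  show ?thesis
    using iet_X_subset iet_itin_in_X iet_itint_in_X by blast
qed

end
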